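(* For $\lambda\ge1$ and $s\in\mathbb R$ let $$\widetilde L(s)=-\int_{-\infty}^{\infty}\Big[1-\cos\big(4\arctan e^{\lambda t}-4\arctan e^{t-s}\big)\Big]\,dt .$$ Let $\lambda_0>1$ be the value of $\lambda$ for which $\max_{t>0}\big(4\arctan e^{\lambda t}-4\arctan e^{t}\big)=\pi/2$ (numerically $\lambda_0\simeq3.68078$). If $1\le\lambda\le\lambda_0$, then $\widetilde L$ has a nondegenerate critical point at $s=0$.
   Context: This $\widetilde L$ is the reduced Melnikov potential for the Hamiltonian $\tfrac12(\eta_1^2+\eta_2^2)+(\cos\xi_1-1)+\lambda^2(\cos\xi_2-1)+\varepsilon(1-\cos(\xi_2-\xi_1))$ along the family of unperturbed homoclinic loops $\xi_1=4\arctan e^{t-s}$, $\xi_2=4\arctan e^{\lambda t}$. The maximum $\max_{t>0}(4\arctan e^{\lambda t}-4\arctan e^{t})$ is increasing in $\lambda$, from $0$ at $\lambda=1$ towards $\pi$ as $\lambda\to\infty$, so $\lambda_0$ is well defined. *)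

theory Defs
  imports "HOL-Analysis.Analysis"
begin

definition Ltilde :: "real \<Rightarrow> real \<Rightarrow> real" where
  "Ltilde lam s = - integral UNIV
     (\<lambda>t. 1 - cos (4 * arctan (exp (lam * t)) - 4 * arctan (exp (t - s))))"

definition phase_max :: "real \<Rightarrow> real" where
  "phase_max lam = (SUP t\<in>{0<..}. 4 * arctan (exp (lam * t)) - 4 * arctan (exp t))"

definition lambda0 :: real where
  "lambda0 = (THE lam. lam > 1 \<and> phase_max lam = pi / 2)"

definition nondeg_crit_point :: "(real \<Rightarrow> real) \<Rightarrow> real \<Rightarrow> bool" where
  "nondeg_crit_point f x \<longleftrightarrow>
     (\<exists>f' d. (\<forall>\<^sub>F y in nhds x. (f has_real_derivative f' y) (at y))
            \<and> f' x = 0 \<and> (f' has_real_derivative d) (at x) \<and> d \<noteq> 0)"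

end

theory Submission
  imports Defs
begin

text \<open>
  Write \<open>k(x) = 4 arctan e\<^sup>x\<close> for the kink, so that \<open>k' = 2 sech\<close> and
  \<open>1 - cos k = 2 sech\<^sup>2\<close>; hence every integrand below is dominated by a multiple of
  \<open>sech\<close>, and \<open>L\<close> may be differentiated twice under the integral sign. After the substitution \<open>t \<mapsto> t + s\<close>,
  \<open>L'(s) = -\<integral> sin(k(\<lambda>(t + s)) - k(t)) k'(t) dt\<close>, which vanishes at \<open>s = 0\<close> because
  \<open>k(-x) = 2\<pi> - k(x)\<close> makes the integrand odd, and
  \<open>L''(0) = -\<lambda> \<integral> cos(k(\<lambda>t) - k(t)) k'(\<lambda>t) k'(t) dt\<close>.
  For \<open>\<lambda> \<le> \<lambda>\<^sub>0\<close> the phase \<open>|k(\<lambda>t) - k(t)|\<close> never exceeds \<open>\<pi>/2\<close>, so the cosine is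
  nonnegative; it equals 1 at \<open>t = 0\<close>, hence \<open>L''(0) < 0\<close>.
\<close>

lemma DERIV_second_order_bound:
  fixes f f' f'' :: "real \<Rightarrow> real"
  assumes S: "convex S" "x \<in> S" "y \<in> S"
    and f': "\<And>z. z \<in> S \<Longrightarrow> (f has_real_derivative f' z) (at z)"
    and f'': "\<And>z. z \<in> S \<Longrightarrow> (f' has_real_derivative f'' z) (at z)"
    and M: "\<And>z. z \<in> S \<Longrightarrow> \<bar>f'' z\<bar> \<le> M"
  shows "\<bar>f y - f x - (y - x) * f' x\<bar> \<le> M * (y - x)\<^sup>2"
proof -
  have seg: "closed_segment x y \<subseteq> S"
    using S by (simp add: closed_segment_subset)
  have "M \<ge> 0"
    using M[OF S(2)] by linarith
  have f'_bound: "\<bar>f' z - f' x\<bar> \<le> M * \<bar>y - x\<bar>" if z: "z \<in> closed_segment x y" for z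
  proof -
    have "norm (f' z - f' x) \<le> M * norm (z - x)"
      using field_differentiable_bound[OF S(1), of f' f'' M z x] has_field_derivative_at_within[OF f'']
        M seg z S(2)
      by (simp add: subset_iff)
    also have "\<dots> \<le> M * \<bar>y - x\<bar>"
      using segment_bound(1)[OF z] \<open>M \<ge> 0\<close> by (simp add: mult_left_mono)
    finally show ?thesis
      by simp
  qed
  have "((\<lambda>z. f z - z * f' x) has_real_derivative f' z - f' x) (at z within closed_segment x y)"
    if "z \<in> closed_segment x y" for z
    by (rule has_field_derivative_at_within)
      (use that seg in \<open>auto intro!: derivative_eq_intros f'\<close>)
  then have "\<bar>(f y - y * f' x) - (f x - x * f' x)\<bar> \<le> (M * \<bar>y - x\<bar>) * \<bar>y - x\<bar>"
    using field_differentiable_bound[OF convex_closed_segment, of x y "\<lambda>z. f z - z * f' x"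
        "\<lambda>z. f' z - f' x" "M * \<bar>y - x\<bar>"] f'_bound
    by simp
  then show ?thesis
    by (simp add: algebra_simps power2_eq_square)
qed

text \<open>Dominating the second derivative gives a Taylor bound on the integrand that is uniform
  in \<open>t\<close>, so no dominated-convergence argument is needed.\<close>

lemma DERIV_integral_lborel:
  fixes f f' f'' :: "real \<Rightarrow> real \<Rightarrow> real" and w :: "real \<Rightarrow> real"
  assumes S: "open S" "convex S" "s \<in> S"
    and f': "\<And>u t. u \<in> S \<Longrightarrow> ((\<lambda>u. f u t) has_real_derivative f' u t) (at u)"
    and f'': "\<And>u t. u \<in> S \<Longrightarrow> ((\<lambda>u. f' u t) has_real_derivative f'' u t) (at u)"
    and w: "\<And>u t. u \<in> S \<Longrightarrow> \<bar>f'' u t\<bar> \<le> w t" "integrable lborel w"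
    and int_f: "\<And>u. u \<in> S \<Longrightarrow> integrable lborel (f u)"
    and int_f': "integrable lborel (f' s)"
  shows "((\<lambda>u. \<integral>t. f u t \<partial>lborel) has_real_derivative (\<integral>t. f' s t \<partial>lborel)) (at s)"
proof -
  define F where "F u = (\<integral>t. f u t \<partial>lborel)" for u
  define F' where "F' = (\<integral>t. f' s t \<partial>lborel)"
  define W where "W = (\<integral>t. w t \<partial>lborel)"
  have taylor: "\<bar>F u - F s - (u - s) * F'\<bar> \<le> W * (u - s)\<^sup>2" if u: "u \<in> S" for u
  proof -
    have "F u - F s - (u - s) * F' = (\<integral>t. f u t - f s t - (u - s) * f' s t \<partial>lborel)"
      unfolding F_def F'_def using int_f[OF u] int_f[OF S(3)] int_f' by simp
    also have "\<bar>\<dots>\<bar> \<le> (\<integral>t. \<bar>f u t - f s t - (u - s) * f' s t\<bar> \<partial>lborel)"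
      by (rule integral_abs_bound)
    also have "\<dots> \<le> (\<integral>t. w t * (u - s)\<^sup>2 \<partial>lborel)"
    proof (rule integral_mono)
      show "integrable lborel (\<lambda>t. \<bar>f u t - f s t - (u - s) * f' s t\<bar>)"
        using int_f[OF u] int_f[OF S(3)] int_f' by auto
      show "\<bar>f u t - f s t - (u - s) * f' s t\<bar> \<le> w t * (u - s)\<^sup>2" for t
        using DERIV_second_order_bound[OF S(2,3) u, of "\<lambda>u. f u t" "\<lambda>u. f' u t"
            "\<lambda>u. f'' u t" "w t"] f' f'' w(1)
        by (simp add: mult.commute)
    qed (use w(2) in simp)
    also have "\<dots> = W * (u - s)\<^sup>2"
      by (simp add: W_def)
    finally show ?thesis .
  qed
  obtain d where d: "d > 0" "ball s d \<subseteq> S"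
    using S(1,3) openE by blast
  have "\<forall>\<^sub>F h in at 0. norm ((F (s + h) - F s) / h - F') \<le> \<bar>h\<bar> * W"
    unfolding eventually_at
  proof (intro exI[of _ d] conjI ballI impI d(1))
    fix h :: real assume h: "h \<noteq> 0 \<and> dist h 0 < d"
    then have "s + h \<in> S"
      using d(2) by (auto simp: dist_real_def)
    have "norm ((F (s + h) - F s) / h - F') = \<bar>F (s + h) - F s - h * F'\<bar> / \<bar>h\<bar>"
      using h by (simp add: field_simps)
    also have "\<dots> \<le> W * h\<^sup>2 / \<bar>h\<bar>"
      using taylor[OF \<open>s + h \<in> S\<close>] by (simp add: divide_right_mono)
    also have "\<dots> = \<bar>h\<bar> * W"
      using h by (simp add: power2_eq_square field_simps)
    finally show "norm ((F (s + h) - F s) / h - F') \<le> \<bar>h\<bar> * W" .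
  qed
  moreover have "((\<lambda>h. \<bar>h\<bar> * W) \<longlongrightarrow> 0) (at 0)"
    by (auto intro!: tendsto_eq_intros)
  ultimately have "((\<lambda>h. (F (s + h) - F s) / h) \<longlongrightarrow> F') (at 0)"
    by (subst LIM_zero_iff[symmetric]) (rule Lim_null_comparison)
  then show ?thesis
    unfolding DERIV_def F_def F'_def .
qed

lemma integrable_lborel_dominated:
  fixes g w :: "real \<Rightarrow> real"
  assumes "continuous_on UNIV g" "integrable lborel w" "\<And>t. \<bar>g t\<bar> \<le> w t"
  shows "integrable lborel g"
proof (rule Bochner_Integration.integrable_bound[OF assms(2)])
  show "g \<in> borel_measurable lborel"
    using borel_measurable_continuous_onI[OF assms(1)] by simp
  show "AE t in lborel. norm (g t) \<le> norm (w t)"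
    using assms(3) by (intro AE_I2) (metis abs_ge_self order.trans real_norm_def)
qed

lemma integral_lborel_pos:
  fixes f :: "real \<Rightarrow> real"
  assumes f: "integrable lborel f" "\<And>t. 0 \<le> f t" and x: "isCont f x" "0 < f x"
  shows "0 < (\<integral>t. f t \<partial>lborel)"
proof -
  have "\<forall>\<^sub>F t in at x. f x / 2 < f t"
    using x by (intro order_tendstoD(1)) (auto simp: isCont_def)
  then obtain d where d: "d > 0" "\<And>t. t \<noteq> x \<Longrightarrow> dist t x < d \<Longrightarrow> f x / 2 < f t"
    unfolding eventually_at by auto
  define I where "I = {x - d / 2 .. x + d / 2}"
  define c where "c = f x / 2"
  have "indicator I t * c \<le> f t" for t
  proof (cases "t \<in> I")
    case True
    then have "dist t x < d"
      using d(1) by (auto simp: I_def dist_real_def)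
    then show ?thesis
      using True d(2)[of t] x(2) by (cases "t = x") (auto simp: c_def)
  qed (use f(2) in auto)
  then have "(\<integral>t. indicator I t * c \<partial>lborel) \<le> (\<integral>t. f t \<partial>lborel)"
    using f(1) d(1) by (intro integral_mono integrable_mult_left integrable_real_indicator)
      (auto simp: I_def)
  moreover have "(\<integral>t. indicator I t * c \<partial>lborel) = d * c"
    using d(1) by (simp add: I_def)
  moreover have "0 < d * c"
    using d(1) x(2) by (simp add: c_def)
  ultimately show ?thesis
    by linarith
qed

lemma one_minus_cos_diff_le:
  fixes x y :: real
  shows "1 - cos (x - y) \<le> 2 * (1 - cos x) + 2 * (1 - cos y)"
proof -
  have "0 \<le> (sin x + sin y)\<^sup>2" "0 \<le> (cos x + cos y - 2)\<^sup>2"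
    by simp_all
  moreover have "(sin x)\<^sup>2 = 1 - (cos x)\<^sup>2" "(sin y)\<^sup>2 = 1 - (cos y)\<^sup>2"
    by (simp_all add: sin_squared_eq)
  ultimately show ?thesis
    unfolding cos_diff power2_eq_square by (simp add: algebra_simps)
qed

section \<open>The kink and its derivatives\<close>

definition kink :: "real \<Rightarrow> real" where
  "kink x = 4 * arctan (exp x)"

definition half_sech :: "real \<Rightarrow> real" where
  "half_sech x = inverse (2 * cosh x)"

lemma half_sech_exp: "half_sech x = exp x / (1 + (exp x)\<^sup>2)"
proof -
  have "2 * cosh x * exp x = 1 + (exp x)\<^sup>2"
    by (simp add: cosh_field_def exp_minus field_simps power2_eq_square)
  then show ?thesis
    unfolding half_sech_def
    by (metis exp_gt_zero inverse_divide nonzero_mult_div_cancel_right less_irrefl)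
qed

lemma kink_has_real_derivative [derivative_intros]:
  assumes "(g has_real_derivative g') (at x within S)"
  shows "((\<lambda>x. kink (g x)) has_real_derivative 4 * half_sech (g x) * g') (at x within S)"
proof -
  have "1 + exp y * exp y \<noteq> 0" for y :: real
    by (smt (verit) zero_le_square)
  then have "(kink has_real_derivative 4 * half_sech y) (at y)" for y
    unfolding kink_def half_sech_exp
    by (auto intro!: derivative_eq_intros simp: power2_eq_square exp_add[symmetric] field_simps)
  then show ?thesis
    using DERIV_chain2 assms by blast
qed

lemma half_sech_has_real_derivative [derivative_intros]:
  assumes "(g has_real_derivative g') (at x within S)"
  shows "((\<lambda>x. half_sech (g x)) has_real_derivative - half_sech (g x) * tanh (g x) * g')
           (at x within S)"
proof -
  have "(half_sech has_real_derivative - half_sech y * tanh y) (at y)" for y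
    unfolding half_sech_def tanh_def
    by (auto intro!: derivative_eq_intros simp: field_simps power2_eq_square)
  then show ?thesis
    using DERIV_chain2 assms by blast
qed

lemma continuous_on_kink [continuous_intros]:
  "continuous_on S g \<Longrightarrow> continuous_on S (\<lambda>x. kink (g x))"
  unfolding kink_def by (auto intro!: continuous_intros)

lemma continuous_on_half_sech [continuous_intros]:
  "continuous_on S g \<Longrightarrow> continuous_on S (\<lambda>x. half_sech (g x))"
  unfolding half_sech_def by (auto intro!: continuous_intros)

lemma half_sech_pos: "0 < half_sech x"
  by (simp add: half_sech_def)

lemma half_sech_le_half: "half_sech x \<le> 1 / 2"
  using cosh_real_ge_1[of x] by (simp add: half_sech_def field_simps)

lemma half_sech_0: "half_sech 0 = 1 / 2"
  by (simp add: half_sech_def)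

lemma half_sech_minus: "half_sech (- x) = half_sech x"
  by (simp add: half_sech_def)

lemma half_sech_antimono_abs: "\<bar>x\<bar> \<le> \<bar>y\<bar> \<Longrightarrow> half_sech y \<le> half_sech x"
  unfolding half_sech_def
  by (metis cosh_real_abs cosh_real_nonneg_le_iff abs_ge_zero cosh_real_pos le_imp_inverse_le
      mult_le_cancel_left_pos zero_less_numeral mult_pos_pos)

lemma abs_mult_half_sech_le_1: "\<bar>x\<bar> * half_sech x \<le> 1"
proof -
  have "1 + \<bar>x\<bar> \<le> exp \<bar>x\<bar>"
    by simp
  also have "\<dots> \<le> 2 * cosh x"
    by (cases "0 \<le> x") (simp_all add: cosh_field_def)
  finally show ?thesis
    by (simp add: half_sech_def field_simps)
qed

lemma half_sech_shift_le: "half_sech (t - u) \<le> exp \<bar>u\<bar> * half_sech t"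
proof -
  have "exp t + exp (- t) \<le> exp \<bar>u\<bar> * (exp (t - u) + exp (u - t))"
    by (cases "0 \<le> u") (simp_all add: distrib_left exp_add[symmetric])
  then have "cosh t \<le> exp \<bar>u\<bar> * cosh (t - u)"
    by (simp add: cosh_field_def)
  then show ?thesis
    by (simp add: half_sech_def field_simps)
qed

lemma abs_tanh_le_1: "\<bar>tanh (x::real)\<bar> \<le> 1"
  using tanh_real_bounds[of x] by (simp add: abs_le_iff)

lemma integrable_half_sech: "integrable lborel half_sech"
proof -
  have "set_integrable lborel (einterval (-\<infinity>) \<infinity>) half_sech"
  proof (rule interval_integral_FTC_nonneg(1)[where F = "\<lambda>x. kink x / 4" and A = 0 and B = "pi/2"])
    show "((\<lambda>x. kink x / 4) has_real_derivative half_sech x) (at x)" for x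
      by (auto intro!: derivative_eq_intros)
    show "isCont half_sech x" for x
      using continuous_on_half_sech[OF continuous_on_id, of UNIV]
      by (simp add: continuous_on_eq_continuous_at)
    show "AE x in lborel. - \<infinity> < ereal x \<longrightarrow> ereal x < \<infinity> \<longrightarrow> 0 \<le> half_sech x"
      using half_sech_pos by (simp add: less_imp_le)
    show "(((\<lambda>x. kink x / 4) \<circ> real_of_ereal) \<longlongrightarrow> 0) (at_right (- \<infinity>))"
      unfolding ereal_tendsto_simps1 kink_def using tendsto_arctan[OF exp_at_bot] by simp
    show "(((\<lambda>x. kink x / 4) \<circ> real_of_ereal) \<longlongrightarrow> pi/2) (at_left \<infinity>)"
      unfolding ereal_tendsto_simps1 kink_def
      using filterlim_compose[OF tendsto_arctan_at_top exp_at_top] by simp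
  qed simp
  then show ?thesis
    by (simp add: set_integrable_def einterval_def)
qed

lemma integrable_half_sech_shift: "integrable lborel (\<lambda>t. half_sech (t - u))"
  using lborel_integrable_real_affine[OF integrable_half_sech, of 1 "- u"] by simp

lemma sin_2_arctan: "sin (2 * arctan y) = 2 * y / (1 + y\<^sup>2)"
proof -
  have "(sqrt (1 + y\<^sup>2))\<^sup>2 = 1 + y\<^sup>2"
    by (simp add: add_pos_nonneg)
  then show ?thesis
    unfolding sin_double sin_arctan cos_arctan by (simp add: field_simps power2_eq_square)
qed

lemma cos_kink: "cos (kink x) = 1 - 8 * (half_sech x)\<^sup>2"
proof -
  have "cos (kink x) = 1 - 2 * (sin (2 * arctan (exp x)))\<^sup>2"
    using cos_double_sin[of "2 * arctan (exp x)"] by (simp add: kink_def)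
  then show ?thesis
    unfolding sin_2_arctan half_sech_exp by (simp add: power_divide power_mult_distrib)
qed

lemma kink_minus: "kink (- x) = 2 * pi - kink x"
proof -
  have "arctan (exp (- x)) = pi / 2 - arctan (exp x)"
    using arctan_inverse[of "exp x"] by (simp add: exp_minus)
  then show ?thesis
    unfolding kink_def by simp
qed

lemma kink_0: "kink 0 = pi"
  by (simp add: kink_def)

lemma kink_pos: "0 < kink x"
  by (simp add: kink_def)

lemma kink_less_2pi: "kink x < 2 * pi"
  using arctan_ubound[of "exp x"] by (simp add: kink_def)

lemma kink_le_iff: "kink x \<le> kink y \<longleftrightarrow> x \<le> y"
  by (simp add: kink_def arctan_le_iff)

lemma kink_less_iff: "kink x < kink y \<longleftrightarrow> x < y"
  by (simp add: kink_def arctan_less_iff)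

lemma kink_le_4_exp: "kink x \<le> 4 * exp x"
  using arctan_le_self[of "exp x"] by (simp add: kink_def)

definition Ltilde_integrand :: "real \<Rightarrow> real \<Rightarrow> real \<Rightarrow> real" where
  "Ltilde_integrand lam s t = cos (kink (lam * t) - kink (t - s)) - 1"

definition Ltilde_integrand_ds :: "real \<Rightarrow> real \<Rightarrow> real \<Rightarrow> real" where
  "Ltilde_integrand_ds lam s t = - sin (kink (lam * t) - kink (t - s)) * (4 * half_sech (t - s))"

definition Ltilde_integrand_ds2 :: "real \<Rightarrow> real \<Rightarrow> real \<Rightarrow> real" where
  "Ltilde_integrand_ds2 lam s t =
     - 4 * sin (kink (lam * t) - kink (t - s)) * half_sech (t - s) * tanh (t - s)
     - 16 * cos (kink (lam * t) - kink (t - s)) * (half_sech (t - s))\<^sup>2"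

text \<open>The substitution \<open>t \<mapsto> t + s\<close> moves the dependence on \<open>s\<close> into the fast kink
  (see \<open>Ltilde_integrand_ds_shift\<close>).\<close>

definition Ltilde_deriv_integrand :: "real \<Rightarrow> real \<Rightarrow> real \<Rightarrow> real" where
  "Ltilde_deriv_integrand lam s t = - sin (kink (lam * (s + t)) - kink t) * (4 * half_sech t)"

definition Ltilde_deriv_integrand_ds :: "real \<Rightarrow> real \<Rightarrow> real \<Rightarrow> real" where
  "Ltilde_deriv_integrand_ds lam s t =
     - 16 * lam * cos (kink (lam * (s + t)) - kink t) * half_sech (lam * (s + t)) * half_sech t"

definition Ltilde_deriv_integrand_ds2 :: "real \<Rightarrow> real \<Rightarrow> real \<Rightarrow> real" where
  "Ltilde_deriv_integrand_ds2 lam s t =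
     16 * lam\<^sup>2 * half_sech t *
       (4 * sin (kink (lam * (s + t)) - kink t) * (half_sech (lam * (s + t)))\<^sup>2
        + cos (kink (lam * (s + t)) - kink t) * half_sech (lam * (s + t)) * tanh (lam * (s + t)))"

lemma Ltilde_integrand_has_real_derivative:
  "((\<lambda>s. Ltilde_integrand lam s t) has_real_derivative Ltilde_integrand_ds lam s t) (at s)"
  unfolding Ltilde_integrand_def Ltilde_integrand_ds_def
  by (auto intro!: derivative_eq_intros simp: algebra_simps)

lemma Ltilde_integrand_ds_has_real_derivative:
  "((\<lambda>s. Ltilde_integrand_ds lam s t) has_real_derivative Ltilde_integrand_ds2 lam s t) (at s)"
  unfolding Ltilde_integrand_ds_def Ltilde_integrand_ds2_def
  by (auto intro!: derivative_eq_intros simp: algebra_simps power2_eq_square)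

lemma Ltilde_deriv_integrand_has_real_derivative:
  "((\<lambda>s. Ltilde_deriv_integrand lam s t) has_real_derivative Ltilde_deriv_integrand_ds lam s t) (at s)"
  unfolding Ltilde_deriv_integrand_def Ltilde_deriv_integrand_ds_def
  by (auto intro!: derivative_eq_intros simp: algebra_simps)

lemma Ltilde_deriv_integrand_ds_has_real_derivative:
  "((\<lambda>s. Ltilde_deriv_integrand_ds lam s t) has_real_derivative Ltilde_deriv_integrand_ds2 lam s t)
     (at s)"
  unfolding Ltilde_deriv_integrand_ds_def Ltilde_deriv_integrand_ds2_def
  by (auto intro!: derivative_eq_intros simp: algebra_simps power2_eq_square)

lemma Ltilde_integrand_ds_shift:
  "Ltilde_integrand_ds lam s (s + t) = Ltilde_deriv_integrand lam s t"
  by (simp add: Ltilde_integrand_ds_def Ltilde_deriv_integrand_def)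

lemma Ltilde_deriv_integrand_odd:
  "Ltilde_deriv_integrand lam 0 (- t) = - Ltilde_deriv_integrand lam 0 t"
proof -
  define \<phi> where "\<phi> = kink (lam * t) - kink t"
  have "kink (lam * - t) - kink (- t) = - \<phi>"
    using kink_minus[of "lam * t"] kink_minus[of t] unfolding mult_minus_right \<phi>_def by linarith
  then have "Ltilde_deriv_integrand lam 0 (- t) = - sin (- \<phi>) * (4 * half_sech t)"
    unfolding Ltilde_deriv_integrand_def add_0_left half_sech_minus by (rule arg_cong)
  moreover have "Ltilde_deriv_integrand lam 0 t = - sin \<phi> * (4 * half_sech t)"
    unfolding Ltilde_deriv_integrand_def add_0_left \<phi>_def ..
  ultimately show ?thesis
    by (simp only: sin_minus minus_mult_left minus_minus)
qed

lemma abs_Ltilde_integrand_le: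
  assumes "1 \<le> lam"
  shows "\<bar>Ltilde_integrand lam u t\<bar> \<le> 8 * half_sech t + 8 * half_sech (t - u)"
proof -
  have sq_le: "(half_sech x)\<^sup>2 \<le> half_sech x / 2" for x
    using half_sech_pos[of x] half_sech_le_half[of x] by (simp add: power2_eq_square)
  have "\<bar>Ltilde_integrand lam u t\<bar> = 1 - cos (kink (lam * t) - kink (t - u))"
    by (simp add: Ltilde_integrand_def)
  also have "\<dots> \<le> 16 * (half_sech (lam * t))\<^sup>2 + 16 * (half_sech (t - u))\<^sup>2"
    using one_minus_cos_diff_le[of "kink (lam * t)" "kink (t - u)"] by (simp add: cos_kink)
  also have "\<dots> \<le> 8 * half_sech (lam * t) + 8 * half_sech (t - u)"
    using sq_le[of "lam * t"] sq_le[of "t - u"] by simp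
  also have "half_sech (lam * t) \<le> half_sech t"
    using assms by (intro half_sech_antimono_abs) (simp add: abs_mult mult_le_cancel_right1)
  finally show ?thesis
    by simp
qed

lemma abs_Ltilde_integrand_ds_le: "\<bar>Ltilde_integrand_ds lam u t\<bar> \<le> 4 * half_sech (t - u)"
  using abs_sin_le_one[of "kink (lam * t) - kink (t - u)"] half_sech_pos[of "t - u"]
  by (simp add: Ltilde_integrand_ds_def abs_mult mult_left_le_one_le)

lemma abs_Ltilde_integrand_ds2_le: "\<bar>Ltilde_integrand_ds2 lam u t\<bar> \<le> 12 * half_sech (t - u)"
proof -
  define p where "p = half_sech (t - u)"
  define \<phi> where "\<phi> = kink (lam * t) - kink (t - u)"
  have p: "0 < p" "p \<le> 1 / 2"
    using half_sech_pos half_sech_le_half by (auto simp: p_def)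
  have "\<bar>sin \<phi>\<bar> * \<bar>tanh (t - u)\<bar> \<le> 1"
    using abs_tanh_le_1 by (intro mult_le_one) auto
  then have "\<bar>- 4 * sin \<phi> * p * tanh (t - u)\<bar> \<le> 4 * p"
    using p by (simp add: abs_mult mult_left_le)
  moreover have "p * \<bar>cos \<phi>\<bar> \<le> 1 / 2"
    using mult_left_le[OF abs_cos_le_one[of \<phi>], of p] p by linarith
  then have "\<bar>16 * cos \<phi> * p\<^sup>2\<bar> \<le> 8 * p"
    using p by (simp add: abs_mult power2_eq_square mult_left_le)
  ultimately show ?thesis
    unfolding Ltilde_integrand_ds2_def p_def[symmetric] \<phi>_def[symmetric] by linarith
qed

lemma abs_Ltilde_deriv_integrand_le: "\<bar>Ltilde_deriv_integrand lam s t\<bar> \<le> 4 * half_sech t"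
  using abs_sin_le_one[of "kink (lam * (s + t)) - kink t"] half_sech_pos[of t]
  by (simp add: Ltilde_deriv_integrand_def abs_mult mult_left_le_one_le)

lemma abs_Ltilde_deriv_integrand_ds_le:
  assumes "0 \<le> lam"
  shows "\<bar>Ltilde_deriv_integrand_ds lam s t\<bar> \<le> 8 * lam * half_sech t"
proof -
  define p where "p = half_sech (lam * (s + t))"
  have p: "0 < p" "p \<le> 1 / 2"
    using half_sech_pos half_sech_le_half by (auto simp: p_def)
  have "\<bar>cos (kink (lam * (s + t)) - kink t)\<bar> * p \<le> 1 * (1 / 2)"
    using abs_cos_le_one p by (intro mult_mono) auto
  then have "8 * lam * half_sech t * (2 * (\<bar>cos (kink (lam * (s + t)) - kink t)\<bar> * p))
      \<le> 8 * lam * half_sech t * 1"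
    using assms half_sech_pos[of t] by (intro mult_left_mono) auto
  then show ?thesis
    using assms p
    by (simp add: Ltilde_deriv_integrand_ds_def p_def[symmetric] abs_mult abs_of_pos[OF half_sech_pos])
qed

lemma abs_Ltilde_deriv_integrand_ds2_le:
  "\<bar>Ltilde_deriv_integrand_ds2 lam s t\<bar> \<le> 24 * lam\<^sup>2 * half_sech t"
proof -
  define p where "p = half_sech (lam * (s + t))"
  define q where "q = tanh (lam * (s + t))"
  define \<phi> where "\<phi> = kink (lam * (s + t)) - kink t"
  have p: "0 < p" "p \<le> 1 / 2"
    using half_sech_pos half_sech_le_half by (auto simp: p_def)
  have "\<bar>sin \<phi>\<bar> * (p * p) \<le> 1 * ((1 / 2) * (1 / 2))"
    using p abs_sin_le_one[of \<phi>] by (intro mult_mono) auto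
  moreover have "\<bar>cos \<phi>\<bar> * p * \<bar>q\<bar> \<le> 1 * (1 / 2) * 1"
    using p abs_cos_le_one[of \<phi>] abs_tanh_le_1 by (intro mult_mono) (auto simp: q_def)
  moreover have "\<bar>4 * sin \<phi> * p\<^sup>2 + cos \<phi> * p * q\<bar>
      \<le> 4 * (\<bar>sin \<phi>\<bar> * (p * p)) + \<bar>cos \<phi>\<bar> * p * \<bar>q\<bar>"
    using abs_triangle_ineq[of "4 * sin \<phi> * p\<^sup>2" "cos \<phi> * p * q"] p
    by (simp add: abs_mult power2_eq_square mult.assoc)
  ultimately have "\<bar>4 * sin \<phi> * p\<^sup>2 + cos \<phi> * p * q\<bar> \<le> 3 / 2"
    by linarith
  then have "16 * lam\<^sup>2 * half_sech t * \<bar>4 * sin \<phi> * p\<^sup>2 + cos \<phi> * p * q\<bar>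
      \<le> 16 * lam\<^sup>2 * half_sech t * (3 / 2)"
    using half_sech_pos[of t] by (intro mult_left_mono) auto
  then show ?thesis
    unfolding Ltilde_deriv_integrand_ds2_def p_def[symmetric] q_def[symmetric] \<phi>_def[symmetric]
    using half_sech_pos[of t] by (simp add: abs_mult)
qed

lemma integrable_Ltilde_integrand:
  assumes "1 \<le> lam"
  shows "integrable lborel (Ltilde_integrand lam u)"
proof (rule integrable_lborel_dominated[where w = "\<lambda>t. 8 * half_sech t + 8 * half_sech (t - u)"])
  show "continuous_on UNIV (Ltilde_integrand lam u)"
    unfolding Ltilde_integrand_def by (intro continuous_intros)
  show "integrable lborel (\<lambda>t. 8 * half_sech t + 8 * half_sech (t - u))"
    using integrable_half_sech integrable_half_sech_shift by simp
  show "\<bar>Ltilde_integrand lam u t\<bar> \<le> 8 * half_sech t + 8 * half_sech (t - u)" for t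
    by (rule abs_Ltilde_integrand_le[OF assms])
qed

lemma integrable_Ltilde_integrand_ds: "integrable lborel (Ltilde_integrand_ds lam u)"
proof (rule integrable_lborel_dominated[where w = "\<lambda>t. 4 * half_sech (t - u)"])
  show "continuous_on UNIV (Ltilde_integrand_ds lam u)"
    unfolding Ltilde_integrand_ds_def by (intro continuous_intros)
qed (simp_all add: integrable_half_sech_shift abs_Ltilde_integrand_ds_le)

lemma integrable_Ltilde_deriv_integrand: "integrable lborel (Ltilde_deriv_integrand lam s)"
proof (rule integrable_lborel_dominated[where w = "\<lambda>t. 4 * half_sech t"])
  show "continuous_on UNIV (Ltilde_deriv_integrand lam s)"
    unfolding Ltilde_deriv_integrand_def by (intro continuous_intros)
qed (simp_all add: integrable_half_sech abs_Ltilde_deriv_integrand_le)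

lemma integrable_Ltilde_deriv_integrand_ds:
  assumes "0 \<le> lam"
  shows "integrable lborel (Ltilde_deriv_integrand_ds lam s)"
proof (rule integrable_lborel_dominated[where w = "\<lambda>t. 8 * lam * half_sech t"])
  show "continuous_on UNIV (Ltilde_deriv_integrand_ds lam s)"
    unfolding Ltilde_deriv_integrand_ds_def by (intro continuous_intros)
qed (simp_all add: integrable_half_sech abs_Ltilde_deriv_integrand_ds_le[OF assms])

section \<open>The first two derivatives of \<^const>\<open>Ltilde\<close>\<close>

definition Ltilde_deriv :: "real \<Rightarrow> real \<Rightarrow> real" where
  "Ltilde_deriv lam s = (\<integral>t. Ltilde_deriv_integrand lam s t \<partial>lborel)"

lemma Ltilde_eq_integral_lborel:
  assumes "1 \<le> lam"
  shows "Ltilde lam s = (\<integral>t. Ltilde_integrand lam s t \<partial>lborel)"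
proof -
  have "Ltilde lam s = integral UNIV (Ltilde_integrand lam s)"
    unfolding Ltilde_def Ltilde_integrand_def kink_def
    by (subst integral_neg[symmetric]) simp
  also have "\<dots> = (\<integral>t. Ltilde_integrand lam s t \<partial>lborel)"
    by (rule integral_lborel[OF integrable_Ltilde_integrand[OF assms]])
  finally show ?thesis .
qed

lemma Ltilde_has_real_derivative:
  assumes "1 \<le> lam" "\<bar>s\<bar> < 1"
  shows "(Ltilde lam has_real_derivative Ltilde_deriv lam s) (at s)"
proof -
  have "((\<lambda>u. \<integral>t. Ltilde_integrand lam u t \<partial>lborel) has_real_derivative
          (\<integral>t. Ltilde_integrand_ds lam s t \<partial>lborel)) (at s)"
  proof (rule DERIV_integral_lborel[where S = "{-1<..<1}"
        and w = "\<lambda>t. 12 * exp 1 * half_sech t"])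
    show "\<bar>Ltilde_integrand_ds2 lam u t\<bar> \<le> 12 * exp 1 * half_sech t" if "u \<in> {-1<..<1}" for u t
    proof -
      have "half_sech (t - u) \<le> exp 1 * half_sech t"
        using half_sech_shift_le[of t u] that half_sech_pos[of t]
        by (smt (verit) exp_le_cancel_iff greaterThanLessThan_iff mult_right_mono)
      then show ?thesis
        using abs_Ltilde_integrand_ds2_le[of lam u t] by simp
    qed
  qed (use assms in \<open>auto intro: Ltilde_integrand_has_real_derivative integrable_half_sech
        Ltilde_integrand_ds_has_real_derivative integrable_Ltilde_integrand
        integrable_Ltilde_integrand_ds\<close>)
  moreover have "(\<integral>t. Ltilde_integrand_ds lam s t \<partial>lborel) = Ltilde_deriv lam s"
    using lborel_integral_real_affine[of 1 "Ltilde_integrand_ds lam s" s]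
    by (simp add: Ltilde_deriv_def Ltilde_integrand_ds_shift)
  moreover have "Ltilde lam = (\<lambda>u. \<integral>t. Ltilde_integrand lam u t \<partial>lborel)"
    using Ltilde_eq_integral_lborel[OF assms(1)] by (intro ext)
  ultimately show ?thesis
    by simp
qed

lemma Ltilde_deriv_0: "Ltilde_deriv lam 0 = 0"
proof -
  have "Ltilde_deriv lam 0 = (\<integral>t. Ltilde_deriv_integrand lam 0 (- t) \<partial>lborel)"
    using lborel_integral_real_affine[of "-1" "Ltilde_deriv_integrand lam 0" 0]
    by (simp add: Ltilde_deriv_def)
  also have "\<dots> = - Ltilde_deriv lam 0"
    by (simp add: Ltilde_deriv_integrand_odd Ltilde_deriv_def)
  finally show ?thesis
    by simp
qed

lemma Ltilde_deriv_has_real_derivative: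
  assumes "0 \<le> lam"
  shows "(Ltilde_deriv lam has_real_derivative (\<integral>t. Ltilde_deriv_integrand_ds lam s t \<partial>lborel))
           (at s)"
  unfolding Ltilde_deriv_def
  by (rule DERIV_integral_lborel[where S = UNIV and w = "\<lambda>t. 24 * lam\<^sup>2 * half_sech t"])
    (use assms in \<open>auto intro: Ltilde_deriv_integrand_has_real_derivative integrable_half_sech
      Ltilde_deriv_integrand_ds_has_real_derivative abs_Ltilde_deriv_integrand_ds2_le
      integrable_Ltilde_deriv_integrand integrable_Ltilde_deriv_integrand_ds\<close>)

lemma Ltilde_second_deriv_neg:
  assumes "0 < lam" and cos_phase: "\<And>t. 0 \<le> cos (kink (lam * t) - kink t)"
  shows "(\<integral>t. Ltilde_deriv_integrand_ds lam 0 t \<partial>lborel) < 0"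
proof -
  have "0 < (\<integral>t. - Ltilde_deriv_integrand_ds lam 0 t \<partial>lborel)"
  proof (rule integral_lborel_pos[where x = 0])
    show "integrable lborel (\<lambda>t. - Ltilde_deriv_integrand_ds lam 0 t)"
      using integrable_Ltilde_deriv_integrand_ds assms(1) by simp
    show "0 \<le> - Ltilde_deriv_integrand_ds lam 0 t" for t
      using cos_phase[of t] half_sech_pos[of t] half_sech_pos[of "lam * t"] assms(1)
      by (simp add: Ltilde_deriv_integrand_ds_def)
    have "continuous_on UNIV (\<lambda>t. - Ltilde_deriv_integrand_ds lam 0 t)"
      unfolding Ltilde_deriv_integrand_ds_def by (intro continuous_intros)
    then show "isCont (\<lambda>t. - Ltilde_deriv_integrand_ds lam 0 t) 0"
      by (simp add: continuous_on_eq_continuous_at)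
    show "0 < - Ltilde_deriv_integrand_ds lam 0 0"
      using assms(1) by (simp add: Ltilde_deriv_integrand_ds_def kink_0 half_sech_0)
  qed
  then show ?thesis
    by simp
qed

section \<open>The maximal phase difference and \<^const>\<open>lambda0\<close>\<close>

lemma phase_max_kink: "phase_max lam = (SUP t\<in>{0<..}. kink (lam * t) - kink t)"
  unfolding phase_max_def kink_def ..

lemma phase_le_phase_max:
  assumes "0 < t"
  shows "kink (lam * t) - kink t \<le> phase_max lam"
proof -
  have "kink (lam * x) - kink x \<le> 2 * pi" for x
    using kink_less_2pi[of "lam * x"] kink_pos[of x] by linarith
  then show ?thesis
    unfolding phase_max_kink using assms by (intro cSUP_upper bdd_aboveI2) auto
qed

lemma phase_max_le: "(\<And>t. 0 < t \<Longrightarrow> kink (lam * t) - kink t \<le> M) \<Longrightarrow> phase_max lam \<le> M"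
  unfolding phase_max_kink by (rule cSUP_least) auto

lemma phase_max_mono: "lam \<le> mu \<Longrightarrow> phase_max lam \<le> phase_max mu"
proof (rule phase_max_le)
  fix t :: real assume "lam \<le> mu" "0 < t"
  then have "kink (lam * t) \<le> kink (mu * t)"
    by (simp add: kink_le_iff)
  then show "kink (lam * t) - kink t \<le> phase_max mu"
    using phase_le_phase_max[OF \<open>0 < t\<close>, of mu] by simp
qed

lemma phase_max_1: "phase_max 1 = 0"
proof (rule antisym)
  show "phase_max 1 \<le> 0"
    by (rule phase_max_le) simp
  show "0 \<le> phase_max 1"
    using phase_le_phase_max[of 1 1] by simp
qed

lemma kink_scale_lipschitz:
  assumes "1 \<le> lam" "1 \<le> mu" "0 < t"
  shows "\<bar>kink (mu * t) - kink (lam * t)\<bar> \<le> 4 * \<bar>mu - lam\<bar>"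
proof -
  have "\<bar>4 * half_sech (x * t) * t\<bar> \<le> 4" if "x \<in> {1..}" for x
  proof -
    have "t * half_sech (x * t) \<le> \<bar>x * t\<bar> * half_sech (x * t)"
      using that assms(3) half_sech_pos[of "x * t"] by (intro mult_right_mono) auto
    also have "\<dots> \<le> 1"
      by (rule abs_mult_half_sech_le_1)
    finally show ?thesis
      using assms(3) half_sech_pos[of "x * t"] by (simp add: abs_mult mult.commute)
  qed
  moreover have "((\<lambda>x. kink (x * t)) has_real_derivative 4 * half_sech (x * t) * t)
      (at x within {1..})" for x
    by (rule has_field_derivative_at_within) (auto intro!: derivative_eq_intros)
  ultimately have "norm (kink (mu * t) - kink (lam * t)) \<le> 4 * norm (mu - lam)"
    using assms by (intro field_differentiable_bound[of "{1..}"]) auto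
  then show ?thesis
    by simp
qed

lemma phase_max_lipschitz: "4-lipschitz_on {1..} phase_max"
proof (rule lipschitz_onI)
  have one_sided: "phase_max lam \<le> phase_max mu + 4 * \<bar>mu - lam\<bar>"
    if "1 \<le> lam" "1 \<le> mu" for lam mu
  proof (rule phase_max_le)
    fix t :: real assume "0 < t"
    then show "kink (lam * t) - kink t \<le> phase_max mu + 4 * \<bar>mu - lam\<bar>"
      using kink_scale_lipschitz[OF that \<open>0 < t\<close>] phase_le_phase_max[OF \<open>0 < t\<close>, of mu] by simp
  qed
  show "dist (phase_max lam) (phase_max mu) \<le> 4 * dist lam mu"
    if "lam \<in> {1..}" "mu \<in> {1..}" for lam mu
    using one_sided[of lam mu] one_sided[of mu lam] that
    by (simp add: dist_real_def abs_le_iff abs_minus_commute)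
qed simp

lemma arctan_diff_le: "\<bar>arctan x - arctan y\<bar> \<le> \<bar>x - y\<bar>"
  using field_differentiable_bound[of UNIV arctan "\<lambda>x. inverse (1 + x\<^sup>2)" 1 x y]
  by (auto intro: DERIV_arctan has_field_derivative_at_within simp: add_pos_nonneg inverse_le_1_iff)

lemma phase_max_100: "pi / 2 \<le> phase_max 100"
proof -
  have "exp (-10) \<le> (1 / 11 :: real)"
    using exp_ge_add_one_self[of 10] by (simp add: exp_minus field_simps)
  then have "kink (- 10) \<le> 4 / 11"
    using kink_le_4_exp[of "-10"] by simp
  moreover have "exp (1 / 10) \<le> (6 / 5 :: real)"
    using exp_bound_lemma[of "1 / 10 :: real"] by simp
  then have "arctan (exp (1 / 10)) - arctan 1 \<le> 1 / 5"
    using arctan_diff_le[of "exp (1 / 10)" 1] by simp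
  then have "kink (1 / 10) \<le> pi + 4 / 5"
    by (simp add: kink_def arctan_one)
  moreover have "kink (100 * (1 / 10)) - kink (1 / 10) \<le> phase_max 100"
    by (rule phase_le_phase_max) simp
  ultimately show ?thesis
    using kink_minus[of 10] pi_gt3 by simp
qed

text \<open>For small \<open>t\<close> both kinks are close to \<open>\<pi>\<close>, and for large \<open>t\<close> both are close to
  \<open>2\<pi>\<close>; in between a compact interval remains, on which the supremum is attained.\<close>

lemma phase_max_attained:
  assumes lam: "1 \<le> lam" and big: "1 < phase_max lam"
  shows "\<exists>t>0. kink (lam * t) - kink t = phase_max lam"
proof -
  define D where "D t = kink (lam * t) - kink t" for t
  define K where "K = {1 / (8 * lam) .. 3}"
  have "K \<noteq> {}"
    using lam by (simp add: K_def field_simps)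
  moreover have "continuous_on K D"
    unfolding D_def by (auto intro!: continuous_intros)
  ultimately obtain t0 where t0: "t0 \<in> K" "\<And>t. t \<in> K \<Longrightarrow> D t \<le> D t0"
    using continuous_attains_sup[OF compact_Icc] unfolding K_def by blast
  have "0 < t0"
    using t0(1) lam by (auto simp: K_def intro: less_le_trans[of 0 "1 / (8 * lam)"])
  have small: "D t \<le> 1" if "0 < t" "t < 1 / (8 * lam)" for t
  proof -
    have "exp (lam * t) \<le> exp (1 / 8)"
      using that lam by (simp add: field_simps)
    also have "\<dots> \<le> 5 / 4"
      using exp_bound_lemma[of "1 / 8 :: real"] by simp
    finally have "exp (lam * t) \<le> 5 / 4" .
    moreover have "1 \<le> exp t" "exp t \<le> exp (lam * t)"
      using that lam by simp_all
    ultimately have "\<bar>exp (lam * t) - exp t\<bar> \<le> 1 / 4"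
      unfolding abs_le_iff by linarith
    then show ?thesis
      using arctan_diff_le[of "exp (lam * t)" "exp t"]
        abs_ge_self[of "arctan (exp (lam * t)) - arctan (exp t)"]
      unfolding D_def kink_def by linarith
  qed
  have large: "D t \<le> 1" if "3 < t" for t
  proof -
    have "4 \<le> exp t"
      using exp_ge_add_one_self[of t] that by linarith
    then have "exp (- t) \<le> 1 / 4"
      by (simp add: exp_minus le_imp_inverse_le[of 4, simplified])
    then have "kink (- t) \<le> 1"
      using kink_le_4_exp[of "- t"] by linarith
    then show ?thesis
      using kink_minus[of t] kink_less_2pi[of "lam * t"] by (simp add: D_def)
  qed
  have "phase_max lam \<le> max (D t0) 1"
    by (rule phase_max_le, unfold D_def[symmetric])
      (metis K_def atLeastAtMost_iff large linorder_not_le max.coboundedI1 max.coboundedI2 small t0(2))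
  then have "phase_max lam \<le> D t0"
    using big by linarith
  then show ?thesis
    using phase_le_phase_max[OF \<open>0 < t0\<close>, of lam] \<open>0 < t0\<close> unfolding D_def by force
qed

lemma phase_max_strict_mono:
  assumes "1 \<le> lam" "lam < mu" "1 < phase_max lam"
  shows "phase_max lam < phase_max mu"
proof -
  obtain t where t: "0 < t" "kink (lam * t) - kink t = phase_max lam"
    using phase_max_attained assms(1,3) by blast
  moreover have "kink (lam * t) < kink (mu * t)"
    using assms(2) t(1) by (simp add: kink_less_iff)
  ultimately have "phase_max lam < kink (mu * t) - kink t"
    by linarith
  also have "\<dots> \<le> phase_max mu"
    by (rule phase_le_phase_max[OF t(1)])
  finally show ?thesis .
qed

lemma lambda0_spec: "1 < lambda0 \<and> phase_max lambda0 = pi / 2"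
  unfolding lambda0_def
proof (rule theI')
  obtain lam where lam: "1 \<le> lam" "lam \<le> 100" "phase_max lam = pi / 2"
    using IVT'[of phase_max 1 "pi / 2" 100] phase_max_1 phase_max_100
      lipschitz_on_continuous_on[OF lipschitz_on_subset[OF phase_max_lipschitz, of "{1..100}"]]
    by auto
  moreover have "lam \<noteq> 1"
    using lam phase_max_1 by auto
  moreover have "l1 = l2" if "1 < l1 \<and> phase_max l1 = pi / 2" "1 < l2 \<and> phase_max l2 = pi / 2"
    for l1 l2
    using phase_max_strict_mono[of l1 l2] phase_max_strict_mono[of l2 l1] that pi_gt3
    by (cases l1 l2 rule: linorder_cases) auto
  ultimately show "\<exists>!lam. 1 < lam \<and> phase_max lam = pi / 2"
    by (metis order.not_eq_order_implies_strict)
qed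

lemma abs_phase_le_pi_half:
  assumes "1 \<le> lam" "lam \<le> lambda0"
  shows "\<bar>kink (lam * t) - kink t\<bar> \<le> pi / 2"
proof -
  have phase_nonneg_le: "0 \<le> kink (lam * t) - kink t \<and> kink (lam * t) - kink t \<le> pi / 2"
    if "0 \<le> t" for t
  proof (cases "t = 0")
    case False
    then have "0 < t"
      using that by simp
    have "phase_max lam \<le> pi / 2"
      using phase_max_mono[OF assms(2)] lambda0_spec by simp
    then show ?thesis
      using phase_le_phase_max[OF \<open>0 < t\<close>, of lam] \<open>0 < t\<close> assms(1) by (simp add: kink_le_iff)
  qed simp
  have "kink (lam * t) - kink t = - (kink (lam * - t) - kink (- t))"
    using kink_minus[of "lam * - t"] kink_minus[of "- t"] by simp
  then show ?thesis
    using phase_nonneg_le[of t] phase_nonneg_le[of "- t"] by (cases "0 \<le> t") auto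
qed

theorem proposition10:
  fixes lam :: real
  assumes "1 \<le> lam" and "lam \<le> lambda0"
  shows "nondeg_crit_point (Ltilde lam) 0"
  unfolding nondeg_crit_point_def
proof (intro exI conjI)
  show "\<forall>\<^sub>F s in nhds 0. (Ltilde lam has_real_derivative Ltilde_deriv lam s) (at s)"
    unfolding eventually_nhds using Ltilde_has_real_derivative[OF assms(1)]
    by (intro exI[of _ "{-1<..<1}"]) auto
  show "Ltilde_deriv lam 0 = 0"
    by (rule Ltilde_deriv_0)
  show "(Ltilde_deriv lam has_real_derivative (\<integral>t. Ltilde_deriv_integrand_ds lam 0 t \<partial>lborel)) (at 0)"
    using assms(1) by (intro Ltilde_deriv_has_real_derivative) simp
  have "0 \<le> cos (kink (lam * t) - kink t)" for t
    using abs_phase_le_pi_half[OF assms, of t] unfolding abs_le_iff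
    by (intro cos_ge_zero) (simp_all only: minus_le_iff)
  then have "(\<integral>t. Ltilde_deriv_integrand_ds lam 0 t \<partial>lborel) < 0"
    using assms(1) by (intro Ltilde_second_deriv_neg) simp_all
  then show "(\<integral>t. Ltilde_deriv_integrand_ds lam 0 t \<partial>lborel) \<noteq> 0"
    by simp
qed

end
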